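(* Let $d\geq 3$ and $n\geq 1$ be integers, let $1\leq l\leq n$, let $v_1,\dots,v_l\in\mathbb R^n$ be orthonormal, and let $\lambda_1,\dots,\lambda_l\in\mathbb R$ be nonzero. Let $T=\sum_{i=1}^l\lambda_i v_i^{\otimes d}\in S^d(\mathbb R^n)$, i.e. $f_T(x)=\sum_{i=1}^l\lambda_i(v_i\cdot x)^d$. Let $V\in\mathbb R^{l\times n}$ be the matrix with rows $v_1,\dots,v_l$, and fix for each $i$ a $(d-2)$-nd root $\lambda_i^{1/(d-2)}\in\mathbb C$ of $\lambda_i$ (write $\lambda_i^{-1/(d-2)}$ for its inverse). For every $k\in\{1,\dots,l\}$, every subset $\mathcal I=\{i_1<i_2<\dots<i_k\}\subseteq\{1,\dots,l\}$ and every $(k-1)$-tuple $(\eta_1,\dots,\eta_{k-1})$ of $(d-2)$-nd roots of unity, define $y\in\mathbb C^l$ by $$y_i=\begin{cases}\eta_j\lambda_{i_j}^{-1/(d-2)} & \text{if } i=i_j,\ j\in\{1,\dots,k-1\},\\ \lambda_{i_k}^{-1/(d-2)} & \text{if } i=i_k,\\ 0 & \text{if } i\notin\mathcal I,\end{cases}$$ and $w=V^Ty\in\mathbb C^n$. Then each such $w$ is an eigenvector of $T$; these vectors $w$ are, up to scaling, $\frac{(d-1)^l-1}{d-2}$ distinct eigenvectors of $T$ in $\mathbb C^n$; and every eigenvector of $T$ is, up to scaling, either one of these vectors $w$ or a nonzero element of the nullspace of $V$ (and every nonzero element of the nullspace of $V$ is an eigenvector of $T$).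
   Context: $S^d(\mathbb R^n)$ (resp. $S^d(\mathbb C^n)$) denotes the space of real (resp. complex) symmetric tensors of order $d$ and dimension $n$, i.e. arrays $(T_{i_1\dots i_d})_{i_j\in\{1,\dots,n\}}$ invariant under permutation of indices. The associated polynomial is $f_T(x)=\sum_{i_1,\dots,i_d}T_{i_1\dots i_d}x_{i_1}\cdots x_{i_d}$. A nonzero vector $w\in\mathbb C^n$ is an eigenvector of $T$ if there is $\lambda\in\mathbb C$ with $Tw^{d-1}=\lambda w$, where $(Tw^{d-1})_i=\sum_{i_2,\dots,i_d}T_{i,i_2,\dots,i_d}w_{i_2}\cdots w_{i_d}$; equivalently $\nabla f_T(w)$ and $w$ are parallel. Eigenvectors are counted up to nonzero scaling. *)

theory Defs
  imports "HOL-Analysis.Analysis"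
begin

text \<open>Vectors of C^n / R^n are indexed by a finite type 'n (n = CARD('n)).
  A (complex) tensor of order d is a function from index lists of length d to complex
  numbers; only lists of length d matter.\<close>

definition cvec :: "real^'n \<Rightarrow> complex^'n" where
  "cvec x = (\<chi> j. complex_of_real (x $ j))"

definition tensor_apply :: "nat \<Rightarrow> ('n::finite list \<Rightarrow> complex) \<Rightarrow> complex^'n \<Rightarrow> complex^'n" where
  "tensor_apply d T w =
     (\<chi> i. \<Sum>is\<in>{xs. length xs = d - 1}. T (i # is) * (\<Prod>j\<leftarrow>is. w $ j))"

definition is_eigenvector :: "nat \<Rightarrow> ('n::finite list \<Rightarrow> complex) \<Rightarrow> complex^'n \<Rightarrow> bool" where
  "is_eigenvector d T w \<longleftrightarrow> w \<noteq> 0 \<and> (\<exists>\<mu>. tensor_apply d T w = \<mu> *s w)"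

text \<open>T = sum_{i<l} lam_i v_i^{\<otimes> d} (indices 0..l-1), as a real array\<close>
definition odeco_tensor :: "nat \<Rightarrow> (nat \<Rightarrow> real) \<Rightarrow> (nat \<Rightarrow> real^'n) \<Rightarrow> 'n list \<Rightarrow> real" where
  "odeco_tensor l lam v xs = (\<Sum>i<l. lam i * (\<Prod>j\<leftarrow>xs. v i $ j))"

definition VT_mult :: "nat \<Rightarrow> (nat \<Rightarrow> real^'n) \<Rightarrow> (nat \<Rightarrow> complex) \<Rightarrow> complex^'n" where
  "VT_mult l v y = (\<Sum>i<l. y i *s cvec (v i))"

definition in_nullspace_V :: "nat \<Rightarrow> (nat \<Rightarrow> real^'n) \<Rightarrow> complex^'n \<Rightarrow> bool" where
  "in_nullspace_V l v w \<longleftrightarrow> (\<forall>i<l. (\<Sum>j\<in>UNIV. complex_of_real (v i $ j) * w $ j) = 0)"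

text \<open>The vector y for subset I = {i_1 < ... < i_k} and tuple eta_1..eta_{k-1};
  r i is the chosen (d-2)-nd root of lam i, and 1 / r i its inverse.
  With s = sorted list of I, i_j = s ! (j-1).\<close>
definition y_vec :: "(nat \<Rightarrow> complex) \<Rightarrow> nat set \<Rightarrow> (nat \<Rightarrow> complex) \<Rightarrow> nat \<Rightarrow> complex" where
  "y_vec r I eta i =
     (let s = sorted_list_of_set I; k = card I in
       (\<Sum>j\<in>{1..k-1}. if i = s ! (j - 1) then eta j / r i else 0)
       + (if i = s ! (k - 1) then 1 / r i else 0))"

definition candidate_eigvecs :: "nat \<Rightarrow> nat \<Rightarrow> (nat \<Rightarrow> real^'n) \<Rightarrow> (nat \<Rightarrow> complex) \<Rightarrow> (complex^'n) set" where
  "candidate_eigvecs d l v r =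
     {VT_mult l v (y_vec r I eta) | I eta.
        I \<subseteq> {..<l} \<and> I \<noteq> {} \<and> (\<forall>j\<in>{1..card I - 1}. eta j ^ (d - 2) = 1)}"

definition proj_class :: "complex^'n \<Rightarrow> (complex^'n) set" where
  "proj_class w = {c *s w | c. c \<noteq> 0}"

end

theory Submission
  imports Defs
begin

text \<open>Write \<open>y\<^sub>k = \<langle>v\<^sub>k, w\<rangle>\<close>. Since \<open>f\<^sub>T(x) = \<Sum>\<^sub>k \<lambda>\<^sub>k \<langle>v\<^sub>k, x\<rangle>\<^sup>d\<close>, the vector \<open>T w\<^sup>d\<^sup>-\<^sup>1\<close> equals
  \<open>\<Sum>\<^sub>k \<lambda>\<^sub>k y\<^sub>k\<^sup>d\<^sup>-\<^sup>1 v\<^sub>k\<close>, which lies in the row space of \<open>V\<close>. Hence \<open>w\<close> is an eigenvector either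
  with eigenvalue 0, which happens exactly on the nullspace of \<open>V\<close>, or with eigenvalue
  \<open>\<mu> \<noteq> 0\<close>, in which case \<open>w = V\<^sup>T y\<close> and \<open>\<lambda>\<^sub>k y\<^sub>k\<^sup>d\<^sup>-\<^sup>2 = \<mu>\<close> on the support \<open>I\<close> of \<open>y\<close>. Thus
  \<open>y\<^sub>k r\<^sub>k\<close> is a \<open>(d-2)\<close>-nd root of \<open>\<mu>\<close> for every \<open>k \<in> I\<close>; normalising the last one to 1
  leaves a \<open>(d-2)\<close>-nd root of unity for each of the others. Counting the pairs \<open>(I, \<eta>)\<close>
  gives \<open>\<Sum>\<^sub>I (d-2)\<^bsup>|I|-1\<^esup> = ((d-1)\<^sup>l - 1)/(d-2)\<close>.\<close>

lemma sum_lists_length_prod_list: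
  fixes f :: "'n::finite \<Rightarrow> 'a::comm_semiring_1"
  shows "(\<Sum>xs\<in>{xs::'n list. length xs = m}. \<Prod>j\<leftarrow>xs. f j) = (\<Sum>j\<in>UNIV. f j) ^ m"
proof (induction m)
  case 0
  then show ?case by simp
next
  case (Suc m)
  have lists_Suc: "{xs::'n list. length xs = Suc m} = (\<lambda>(x, xs). x # xs) ` (UNIV \<times> {xs. length xs = m})"
    by (auto simp: length_Suc_conv)
  have inj: "inj_on (\<lambda>(x, xs). x # xs) (UNIV \<times> {xs::'n list. length xs = m})"
    by (auto simp: inj_on_def)
  have "(\<Sum>xs\<in>{xs::'n list. length xs = Suc m}. \<Prod>j\<leftarrow>xs. f j)
      = (\<Sum>x\<in>UNIV. \<Sum>xs\<in>{xs::'n list. length xs = m}. f x * (\<Prod>j\<leftarrow>xs. f j))"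
    unfolding lists_Suc sum.reindex[OF inj] sum.cartesian_product by (simp add: case_prod_beta)
  also have "\<dots> = (\<Sum>j\<in>UNIV. f j) * (\<Sum>xs\<in>{xs::'n list. length xs = m}. \<Prod>j\<leftarrow>xs. f j)"
    by (simp add: sum_distrib_left sum_distrib_right) (rule sum.swap)
  finally show ?case using Suc by simp
qed

lemma sum_power_card_Pow_nonempty:
  fixes a :: nat
  assumes "finite A"
  shows "a * (\<Sum>I\<in>Pow A - {{}}. a ^ (card I - 1)) = (a + 1) ^ card A - 1"
proof -
  have "a * (\<Sum>I\<in>Pow A - {{}}. a ^ (card I - 1)) = (\<Sum>I\<in>Pow A - {{}}. a ^ card I)"
    unfolding sum_distrib_left
  proof (rule sum.cong)
    fix I assume "I \<in> Pow A - {{}}"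
    then have "card I \<noteq> 0" using assms rev_finite_subset by (auto simp: card_eq_0_iff)
    then show "a * a ^ (card I - 1) = a ^ card I" by (metis power_eq_if)
  qed simp
  also have "\<dots> = (\<Sum>I\<in>Pow A. a ^ card I) - 1"
    using assms by (subst sum.remove[of "Pow A" "{}"]) auto
  also have "\<dots> = (a + 1) ^ card A - 1"
    using prod_add[OF assms, of "\<lambda>_. a" "\<lambda>_. 1"] by simp
  finally show ?thesis .
qed

lemma proj_class_eqD:
  assumes "proj_class w1 = proj_class w2"
  obtains c where "c \<noteq> 0" "w1 = c *s w2"
proof -
  have "w1 \<in> proj_class w1" unfolding proj_class_def by (rule CollectI, rule exI[of _ 1]) simp
  then show ?thesis using assms that unfolding proj_class_def by blast
qed

subsection \<open>Coordinates with respect to real vectors\<close>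

definition cinner :: "real^'n \<Rightarrow> complex^'n \<Rightarrow> complex" where
  "cinner u w = (\<Sum>j\<in>UNIV. complex_of_real (u $ j) * w $ j)"

lemma cinner_cvec: "cinner u (cvec x) = complex_of_real (u \<bullet> x)"
  by (simp add: cinner_def cvec_def inner_vec_def)

lemma cinner_scale: "cinner u (a *s x) = a * cinner u x"
  by (simp add: cinner_def sum_distrib_left mult_ac)

lemma cinner_sum: "cinner u (\<Sum>i\<in>A. f i) = (\<Sum>i\<in>A. cinner u (f i))"
  by (induction A rule: infinite_finite_induct)
     (auto simp: cinner_def sum.distrib algebra_simps sum_component)

lemma cinner_zero [simp]: "cinner u 0 = 0"
  by (simp add: cinner_def)

lemma in_nullspace_V_iff: "in_nullspace_V l v w \<longleftrightarrow> (\<forall>i<l. cinner (v i) w = 0)"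
  by (simp add: in_nullspace_V_def cinner_def)

lemma VT_mult_cong: "(\<And>i. i < l \<Longrightarrow> y i = y' i) \<Longrightarrow> VT_mult l v y = VT_mult l v y'"
  unfolding VT_mult_def by simp

lemma scale_VT_mult: "c *s VT_mult l v y = VT_mult l v (\<lambda>i. c * y i)"
  unfolding VT_mult_def
  by (simp add: vector_smult_assoc sum_distrib_left vec_eq_iff sum_component mult_ac)

lemma of_real_prod_list: "complex_of_real (\<Prod>j\<leftarrow>xs. g j) = (\<Prod>j\<leftarrow>xs. complex_of_real (g j))"
  by (induction xs) auto

lemma prod_list_map_mult:
  "(\<Prod>j\<leftarrow>xs. (f j :: 'a::comm_monoid_mult)) * (\<Prod>j\<leftarrow>xs. g j) = (\<Prod>j\<leftarrow>xs. f j * g j)"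
  by (induction xs) (auto simp: algebra_simps)

lemma tensor_apply_odeco_tensor:
  assumes "d \<ge> 1"
  shows "tensor_apply d (\<lambda>xs. complex_of_real (odeco_tensor l lam v xs)) w
       = VT_mult l v (\<lambda>k. complex_of_real (lam k) * cinner (v k) w ^ (d - 1))"
proof -
  have "tensor_apply d (\<lambda>xs. complex_of_real (odeco_tensor l lam v xs)) w $ i
      = VT_mult l v (\<lambda>k. complex_of_real (lam k) * cinner (v k) w ^ (d - 1)) $ i" for i
  proof -
    have "tensor_apply d (\<lambda>xs. complex_of_real (odeco_tensor l lam v xs)) w $ i
      = (\<Sum>k<l. complex_of_real (lam k) * complex_of_real (v k $ i) *
           (\<Sum>is\<in>{xs. length xs = d - 1}. \<Prod>j\<leftarrow>is. complex_of_real (v k $ j) * w $ j))"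
      unfolding tensor_apply_def odeco_tensor_def
      by (simp add: sum_distrib_right sum_distrib_left of_real_prod_list mult.assoc
          prod_list_map_mult[symmetric] sum.swap[where B = "{..<l}"])
    then show ?thesis
      using assms by (simp add: sum_lists_length_prod_list cinner_def cvec_def VT_mult_def
          sum_component mult_ac)
  qed
  then show ?thesis by (simp add: vec_eq_iff)
qed

subsection \<open>The coefficient vectors \<open>y\<close>\<close>

definition admissible :: "nat \<Rightarrow> nat \<Rightarrow> nat set \<Rightarrow> (nat \<Rightarrow> complex) \<Rightarrow> bool" where
  "admissible d l I eta \<longleftrightarrow> I \<subseteq> {..<l} \<and> I \<noteq> {} \<and> (\<forall>j\<in>{1..card I - 1}. eta j ^ (d - 2) = 1)"

lemma candidate_eigvecs_eq:
  "candidate_eigvecs d l v r = {VT_mult l v (y_vec r I eta) | I eta. admissible d l I eta}"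
  unfolding candidate_eigvecs_def admissible_def by simp

lemma admissible_finite: "admissible d l I eta \<Longrightarrow> finite I"
  unfolding admissible_def using finite_subset by blast

lemma y_vec_sorted_nth:
  assumes fin: "finite I" and p: "p < card I"
  shows "y_vec r I eta (sorted_list_of_set I ! p)
       = (if p < card I - 1 then eta (p + 1) else 1) / r (sorted_list_of_set I ! p)"
proof -
  define s where "s = sorted_list_of_set I"
  define k where "k = card I"
  have dist: "distinct s" and len: "length s = k"
    using fin by (auto simp: s_def k_def)
  have eq: "s ! p = s ! q \<longleftrightarrow> p = q" if "q < k" for q
    using nth_eq_iff_index_eq[OF dist] p that len k_def by auto
  have "(\<Sum>j\<in>{1..k-1}. if s ! p = s ! (j - 1) then eta j / r (s ! p) else 0)
      = (\<Sum>j\<in>{1..k-1}. if j = p + 1 then eta j / r (s ! p) else 0)"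
    by (rule sum.cong) (auto simp: eq)
  also have "\<dots> = (if p < k - 1 then eta (p + 1) / r (s ! p) else 0)"
    by (subst sum.delta) auto
  finally show ?thesis
    unfolding y_vec_def Let_def s_def[symmetric] k_def[symmetric]
    using eq[of "k - 1"] p k_def by auto
qed

lemma y_vec_notin:
  assumes fin: "finite I" and ne: "I \<noteq> {}" and i: "i \<notin> I"
  shows "y_vec r I eta i = 0"
proof -
  have nth: "i \<noteq> sorted_list_of_set I ! q" if "q < card I" for q
    using that fin i by (metis length_sorted_list_of_set nth_mem set_sorted_list_of_set)
  have "card I > 0" using fin ne by (simp add: card_gt_0_iff)
  then have "\<forall>j\<in>{1..card I - 1}. i \<noteq> sorted_list_of_set I ! (j - 1)"
    "i \<noteq> sorted_list_of_set I ! (card I - 1)"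
    by (auto intro!: nth)
  then show ?thesis unfolding y_vec_def Let_def by simp
qed

lemma y_vec_in:
  assumes fin: "finite I" and i: "i \<in> I"
  obtains p where "p < card I" "i = sorted_list_of_set I ! p"
    "y_vec r I eta i = (if p < card I - 1 then eta (p + 1) else 1) / r i"
proof -
  obtain p where "p < length (sorted_list_of_set I)" "sorted_list_of_set I ! p = i"
    using i fin by (metis in_set_conv_nth set_sorted_list_of_set)
  then show ?thesis using that y_vec_sorted_nth[OF fin, of p r eta] fin by auto
qed

lemma sorted_list_of_set_last_mem:
  "finite I \<Longrightarrow> I \<noteq> {} \<Longrightarrow> sorted_list_of_set I ! (card I - 1) \<in> I"
  by (metis card_gt_0_iff diff_less length_sorted_list_of_set nth_mem set_sorted_list_of_set
      zero_less_one)

lemma y_vec_restrict: "y_vec r I (restrict eta {1..card I - 1}) = y_vec r I eta"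
  unfolding y_vec_def Let_def by (auto intro!: sum.cong ext)

subsection \<open>Eigenvectors of an orthogonally decomposable tensor\<close>

locale odeco =
  fixes d l :: nat and v :: "nat \<Rightarrow> real^'n" and lam :: "nat \<Rightarrow> real" and r :: "nat \<Rightarrow> complex"
  assumes d_ge_3: "d \<ge> 3"
    and orthonormal: "\<forall>i<l. \<forall>j<l. v i \<bullet> v j = (if i = j then 1 else 0)"
    and lam_nonzero: "\<forall>i<l. lam i \<noteq> 0"
    and root_power: "\<forall>i<l. r i ^ (d - 2) = complex_of_real (lam i)"
begin

abbreviation T :: "'n list \<Rightarrow> complex" where
  "T \<equiv> \<lambda>xs. complex_of_real (odeco_tensor l lam v xs)"

lemma r_nonzero: "i < l \<Longrightarrow> r i \<noteq> 0"
  using d_ge_3 lam_nonzero root_power by (cases "d - 2") auto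

lemma cinner_VT_mult: "k < l \<Longrightarrow> cinner (v k) (VT_mult l v y) = y k"
proof -
  assume k: "k < l"
  have "cinner (v k) (VT_mult l v y) = (\<Sum>i<l. y i * (if k = i then 1 else 0))"
    using orthonormal k by (auto simp: VT_mult_def cinner_sum cinner_scale cinner_cvec intro!: sum.cong)
  also have "\<dots> = y k" using k by (simp add: if_distrib cong: if_cong)
  finally show ?thesis .
qed

lemma tensor_apply_T: "tensor_apply d T w = VT_mult l v (\<lambda>k. lam k * cinner (v k) w ^ (d - 1))"
  using d_ge_3 by (simp add: tensor_apply_odeco_tensor)

lemma y_vec_nonzero_iff:
  assumes "admissible d l I eta"
  shows "y_vec r I eta k \<noteq> 0 \<longleftrightarrow> k \<in> I"
proof
  show "k \<in> I" if "y_vec r I eta k \<noteq> 0"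
    using that y_vec_notin[OF admissible_finite[OF assms]] assms by (auto simp: admissible_def)
next
  assume k: "k \<in> I"
  then obtain p where p: "p < card I"
    and y: "y_vec r I eta k = (if p < card I - 1 then eta (p + 1) else 1) / r k"
    using y_vec_in[OF admissible_finite[OF assms]] by blast
  have "eta (p + 1) \<noteq> 0" if "p < card I - 1"
  proof -
    have "eta (p + 1) ^ (d - 2) = 1" using assms that by (simp add: admissible_def)
    then show ?thesis using d_ge_3 by (auto simp: power_0_left)
  qed
  moreover have "r k \<noteq> 0" using k assms r_nonzero by (auto simp: admissible_def)
  ultimately show "y_vec r I eta k \<noteq> 0" using y by simp
qed

lemma y_vec_power_fixed:
  assumes "admissible d l I eta"
  shows "complex_of_real (lam i) * y_vec r I eta i ^ (d - 1) = y_vec r I eta i"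
proof (cases "i \<in> I")
  case False
  then show ?thesis using y_vec_notin[OF admissible_finite[OF assms]] assms d_ge_3
    by (simp add: admissible_def)
next
  case True
  then obtain p where p: "p < card I"
    and y: "y_vec r I eta i = (if p < card I - 1 then eta (p + 1) else 1) / r i"
    using y_vec_in[OF admissible_finite[OF assms]] by blast
  define e where "e = (if p < card I - 1 then eta (p + 1) else 1)"
  have e: "e ^ (d - 2) = 1" using assms p unfolding e_def admissible_def by auto
  have i: "i < l" "r i \<noteq> 0" using True assms r_nonzero by (auto simp: admissible_def)
  have "d - 1 = Suc (d - 2)" using d_ge_3 by simp
  then have "complex_of_real (lam i) * (e / r i) ^ (d - 1)
      = (e / r i) * (e ^ (d - 2) * (r i ^ (d - 2) / r i ^ (d - 2)))"
    using root_power i by (simp add: power_divide field_simps)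
  also have "\<dots> = e / r i" using e i by simp
  finally show ?thesis using y e_def by simp
qed

lemma candidate_is_eigenvector:
  assumes "w \<in> candidate_eigvecs d l v r"
  shows "is_eigenvector d T w"
proof -
  obtain I eta where w: "w = VT_mult l v (y_vec r I eta)" and adm: "admissible d l I eta"
    using assms unfolding candidate_eigvecs_eq by blast
  have "tensor_apply d T w = VT_mult l v (\<lambda>k. lam k * y_vec r I eta k ^ (d - 1))"
    unfolding tensor_apply_T w by (rule VT_mult_cong) (simp add: cinner_VT_mult)
  also have "\<dots> = 1 *s w"
    unfolding w y_vec_power_fixed[OF adm] by simp
  finally have "tensor_apply d T w = 1 *s w" .
  moreover have "w \<noteq> 0"
  proof -
    obtain k where k: "k \<in> I" using adm by (auto simp: admissible_def)
    with adm have "k < l" by (auto simp: admissible_def)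
    then have "cinner (v k) w = y_vec r I eta k" unfolding w by (rule cinner_VT_mult)
    moreover have "y_vec r I eta k \<noteq> 0" using k y_vec_nonzero_iff[OF adm] by blast
    ultimately show ?thesis by auto
  qed
  ultimately show ?thesis unfolding is_eigenvector_def by blast
qed

lemma nullspace_is_eigenvector:
  assumes "w \<noteq> 0" "in_nullspace_V l v w"
  shows "is_eigenvector d T w"
proof -
  have "tensor_apply d T w = 0 *s w"
    using assms d_ge_3 by (simp add: tensor_apply_T in_nullspace_V_iff power_0_left VT_mult_def)
  then show ?thesis using assms unfolding is_eigenvector_def by blast
qed

lemma y_vec_scaled_unique:
  assumes adm1: "admissible d l I1 e1" and adm2: "admissible d l I2 e2"
    and scaled: "\<forall>k<l. y_vec r I1 e1 k = c * y_vec r I2 e2 k"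
  shows "c = 1" and "I1 = I2" and "\<forall>j\<in>{1..card I1 - 1}. e1 j = e2 j"
proof -
  note nz1 = y_vec_nonzero_iff[OF adm1] and nz2 = y_vec_nonzero_iff[OF adm2]
  have y: "y_vec r I1 e1 k = c * y_vec r I2 e2 k" for k
  proof (cases "k < l")
    case False
    then have "k \<notin> I1" "k \<notin> I2" using adm1 adm2 by (auto simp: admissible_def)
    then have "y_vec r I1 e1 k = 0" "y_vec r I2 e2 k = 0" using nz1 nz2 by blast+
    then show ?thesis by simp
  qed (use scaled in blast)
  have fin: "finite I1" using adm1 by (rule admissible_finite)
  obtain k where "k \<in> I1" using adm1 by (auto simp: admissible_def)
  then have "c \<noteq> 0" using nz1[of k] y[of k] by auto
  then have "k \<in> I1 \<longleftrightarrow> k \<in> I2" for k using nz1[of k] nz2[of k] y[of k] by auto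
  then show I: "I1 = I2" by (rule set_eqI)
  define m where "m = sorted_list_of_set I1 ! (card I1 - 1)"
  have "m \<in> I1" unfolding m_def
    using adm1 by (intro sorted_list_of_set_last_mem fin) (auto simp: admissible_def)
  then have "r m \<noteq> 0" using adm1 r_nonzero by (auto simp: admissible_def)
  moreover have "card I1 > 0" using \<open>m \<in> I1\<close> fin card_gt_0_iff by blast
  then have "card I1 - 1 < card I1" by simp
  then have "y_vec r I1 e1 m = 1 / r m" "y_vec r I1 e2 m = 1 / r m"
    unfolding m_def by (simp_all add: y_vec_sorted_nth[OF fin])
  ultimately show c: "c = 1" using y[of m] I by (simp add: field_simps)
  show "\<forall>j\<in>{1..card I1 - 1}. e1 j = e2 j"
  proof
    fix j assume j: "j \<in> {1..card I1 - 1}"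
    define k where "k = sorted_list_of_set I1 ! (j - 1)"
    have p: "j - 1 < card I1" "j - 1 < card I1 - 1" using j by auto
    then have "k \<in> I1" unfolding k_def using fin
      by (metis length_sorted_list_of_set nth_mem set_sorted_list_of_set)
    then have "r k \<noteq> 0" using adm1 r_nonzero by (auto simp: admissible_def)
    moreover have "y_vec r I1 e1 k = e1 j / r k" "y_vec r I1 e2 k = e2 j / r k"
      unfolding k_def using y_vec_sorted_nth[OF fin p(1)] p j by auto
    ultimately show "e1 j = e2 j" using y[of k] I c by simp
  qed
qed

lemma card_proj_class_candidates:
  "card (proj_class ` candidate_eigvecs d l v r) = (\<Sum>I\<in>Pow {..<l} - {{}}. (d - 2) ^ (card I - 1))"
proof -
  define U where "U = {z::complex. z ^ (d - 2) = 1}"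
  define P where "P = (SIGMA I:Pow {..<l} - {{}}. PiE {1..card I - 1} (\<lambda>_. U))"
  define F where "F = (\<lambda>(I, eta). VT_mult l v (y_vec r I eta))"
  have finU: "finite U" and cardU: "card U = d - 2"
    unfolding U_def using d_ge_3 by (auto intro: finite_roots_unity card_roots_unity_eq)
  have P_iff: "(I, eta) \<in> P \<longleftrightarrow> admissible d l I eta \<and> eta \<in> extensional {1..card I - 1}" for I eta
    unfolding P_def U_def admissible_def by (auto simp: PiE_iff)
  have "candidate_eigvecs d l v r = F ` P"
  proof (intro equalityI subsetI)
    fix w assume "w \<in> candidate_eigvecs d l v r"
    then obtain I eta where w: "w = VT_mult l v (y_vec r I eta)" and "admissible d l I eta"
      unfolding candidate_eigvecs_eq by blast
    then have "(I, restrict eta {1..card I - 1}) \<in> P" by (simp add: P_iff admissible_def)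
    moreover have "w = F (I, restrict eta {1..card I - 1})"
      unfolding w F_def by (simp only: case_prod_conv y_vec_restrict)
    ultimately show "w \<in> F ` P" by blast
  next
    fix w assume "w \<in> F ` P"
    then obtain I eta where "w = VT_mult l v (y_vec r I eta)" "admissible d l I eta"
      unfolding F_def using P_iff by auto
    then show "w \<in> candidate_eigvecs d l v r" unfolding candidate_eigvecs_eq by blast
  qed
  moreover have "inj_on (proj_class \<circ> F) P"
  proof (rule inj_onI)
    fix x1 x2 assume x12: "x1 \<in> P" "x2 \<in> P" and eq: "(proj_class \<circ> F) x1 = (proj_class \<circ> F) x2"
    obtain I1 e1 I2 e2 where x: "x1 = (I1, e1)" "x2 = (I2, e2)" by (cases x1, cases x2) auto
    have P: "admissible d l I1 e1" "admissible d l I2 e2"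
        "e1 \<in> extensional {1..card I1 - 1}" "e2 \<in> extensional {1..card I2 - 1}"
      using x12 P_iff unfolding x by auto
    obtain c where c: "F x1 = c *s F x2" using eq unfolding comp_def by (rule proj_class_eqD)
    have "\<forall>k<l. y_vec r I1 e1 k = c * y_vec r I2 e2 k"
    proof (intro allI impI)
      fix k assume k: "k < l"
      have "y_vec r I1 e1 k = cinner (v k) (F x1)" by (simp add: x F_def cinner_VT_mult k)
      also have "\<dots> = c * y_vec r I2 e2 k" unfolding c by (simp add: x F_def cinner_scale cinner_VT_mult k)
      finally show "y_vec r I1 e1 k = c * y_vec r I2 e2 k" .
    qed
    note unique = y_vec_scaled_unique[OF P(1,2) this]
    have "e1 = e2"
      by (rule extensionalityI[OF P(3) P(4)[folded unique(2)]]) (use unique(3) in blast)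
    then show "x1 = x2" using unique(2) x by simp
  qed
  ultimately have "card (proj_class ` candidate_eigvecs d l v r) = card P"
    by (metis card_image image_comp)
  also have "\<dots> = (\<Sum>I\<in>Pow {..<l} - {{}}. (d - 2) ^ (card I - 1))"
    unfolding P_def using finU cardU by (simp add: card_PiE finite_PiE)
  finally show ?thesis .
qed

lemma real_card_proj_class_candidates:
  "real (card (proj_class ` candidate_eigvecs d l v r)) = ((real d - 1) ^ l - 1) / (real d - 2)"
proof -
  let ?N = "card (proj_class ` candidate_eigvecs d l v r)"
  have "(d - 2) * ?N = (d - 1) ^ l - 1"
    using sum_power_card_Pow_nonempty[of "{..<l}" "d - 2"] d_ge_3
    by (simp add: card_proj_class_candidates Suc_diff_Suc numeral_2_eq_2)
  moreover have "1 \<le> (d - 1) ^ l" using d_ge_3 by simp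
  ultimately have "real (d - 2) * real ?N = real ((d - 1) ^ l) - 1"
    by (metis of_nat_1 of_nat_diff of_nat_mult)
  moreover have "real (d - 2) = real d - 2" "real (d - 1) = real d - 1"
    using d_ge_3 by (simp_all add: of_nat_diff)
  ultimately show ?thesis using d_ge_3 by (simp add: field_simps)
qed

lemma eigenvector_outside_nullspace:
  assumes ev: "is_eigenvector d T w" and not_null: "\<not> in_nullspace_V l v w"
  obtains mu where "mu \<noteq> 0" and "w = VT_mult l v (\<lambda>k. cinner (v k) w)"
    and "\<And>k. k < l \<Longrightarrow> cinner (v k) w \<noteq> 0 \<Longrightarrow> lam k * cinner (v k) w ^ (d - 2) = mu"
proof -
  define y where "y k = cinner (v k) w" for k
  obtain mu where mu: "VT_mult l v (\<lambda>k. lam k * y k ^ (d - 1)) = mu *s w"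
    using ev unfolding is_eigenvector_def tensor_apply_T y_def by blast
  have coord: "lam k * y k ^ (d - 1) = mu * y k" if "k < l" for k
    using arg_cong[OF mu, of "cinner (v k)"] that by (simp add: cinner_VT_mult cinner_scale y_def)
  have "d - 1 = Suc (d - 2)" using d_ge_3 by simp
  then have pow: "lam k * y k ^ (d - 2) = mu" if "k < l" "y k \<noteq> 0" for k
    using coord[OF that(1)] that(2) by (simp add: field_simps)
  obtain k0 where k0: "k0 < l" "y k0 \<noteq> 0"
    using not_null unfolding in_nullspace_V_iff y_def by blast
  have "mu \<noteq> 0" using pow[OF k0] k0 lam_nonzero by auto
  moreover have "w = VT_mult l v y"
  proof -
    have "w = (1 / mu) *s VT_mult l v (\<lambda>k. lam k * y k ^ (d - 1))"
      unfolding mu using \<open>mu \<noteq> 0\<close> by (simp add: vector_smult_assoc)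
    also have "\<dots> = VT_mult l v y"
      unfolding scale_VT_mult by (intro VT_mult_cong) (use coord \<open>mu \<noteq> 0\<close> in simp)
    finally show ?thesis .
  qed
  ultimately show ?thesis using that pow unfolding y_def by blast
qed

lemma scaled_y_vec_of_power_eq:
  fixes y :: "nat \<Rightarrow> complex" and mu :: complex
  assumes I: "I \<subseteq> {..<l}" "I \<noteq> {}"
    and supp: "\<And>k. k < l \<Longrightarrow> y k \<noteq> 0 \<longleftrightarrow> k \<in> I"
    and pow: "\<And>k. k \<in> I \<Longrightarrow> lam k * y k ^ (d - 2) = mu"
  obtains c eta where "c \<noteq> 0" and "admissible d l I eta"
    and "\<And>k. k < l \<Longrightarrow> y k = c * y_vec r I eta k"
proof -
  have fin: "finite I" using I finite_subset by blast
  define s where "s = sorted_list_of_set I"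
  define m where "m = s ! (card I - 1)"
  have mI: "m \<in> I" unfolding m_def s_def using fin I(2) by (rule sorted_list_of_set_last_mem)
  have sI: "s ! q \<in> I" if "q < card I" for q
    using that fin unfolding s_def by (metis length_sorted_list_of_set nth_mem set_sorted_list_of_set)
  have rnz: "r k \<noteq> 0" if "k \<in> I" for k using that I r_nonzero by auto
  have ynz: "y k \<noteq> 0" if "k \<in> I" for k using that I supp by auto
  have root: "(y k * r k) ^ (d - 2) = mu" if "k \<in> I" for k
    using that pow[OF that] root_power I by (auto simp: power_mult_distrib mult_ac)
  define c where "c = y m * r m"
  have "c \<noteq> 0" unfolding c_def using mI rnz ynz by simp
  then have "mu \<noteq> 0" using root[OF mI] unfolding c_def by auto
  define eta where "eta j = y (s ! (j - 1)) * r (s ! (j - 1)) / c" for j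
  have "admissible d l I eta"
    unfolding admissible_def
  proof (intro conjI I ballI)
    fix j assume "j \<in> {1..card I - 1}"
    then have "s ! (j - 1) \<in> I" by (intro sI) auto
    then show "eta j ^ (d - 2) = 1"
      unfolding eta_def power_divide c_def using root[OF mI] root \<open>mu \<noteq> 0\<close> by simp
  qed
  moreover have "y k = c * y_vec r I eta k" if "k < l" for k
  proof (cases "k \<in> I")
    case False
    then show ?thesis using y_vec_notin[OF fin I(2) False] supp[OF that] by simp
  next
    case True
    then obtain p where p: "p < card I" "k = s ! p"
      and yv: "y_vec r I eta k = (if p < card I - 1 then eta (p + 1) else 1) / r k"
      using y_vec_in[OF fin] unfolding s_def by blast
    show ?thesis
    proof (cases "p < card I - 1")
      case True
      then show ?thesis using yv p \<open>c \<noteq> 0\<close> rnz[OF \<open>k \<in> I\<close>] unfolding eta_def by simp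
    next
      case False
      then have "p = card I - 1" using p by simp
      then have "k = m" using p unfolding m_def by simp
      then show ?thesis using yv False rnz[OF \<open>k \<in> I\<close>] unfolding c_def by simp
    qed
  qed
  ultimately show ?thesis using \<open>c \<noteq> 0\<close> that by blast
qed

lemma eigenvector_cases:
  assumes ev: "is_eigenvector d T w"
  shows "(\<exists>w0\<in>candidate_eigvecs d l v r. w \<in> proj_class w0) \<or> (w \<noteq> 0 \<and> in_nullspace_V l v w)"
proof (cases "in_nullspace_V l v w")
  case True
  then show ?thesis using ev unfolding is_eigenvector_def by blast
next
  case False
  define y where "y k = cinner (v k) w" for k
  obtain mu where w: "w = VT_mult l v y"
    and pow: "\<And>k. k < l \<Longrightarrow> y k \<noteq> 0 \<Longrightarrow> lam k * y k ^ (d - 2) = mu"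
    using eigenvector_outside_nullspace[OF ev False] unfolding y_def by metis
  define I where "I = {k. k < l \<and> y k \<noteq> 0}"
  have "I \<noteq> {}" using False unfolding I_def in_nullspace_V_iff y_def by blast
  then obtain c eta where "c \<noteq> 0" "admissible d l I eta" and y: "\<And>k. k < l \<Longrightarrow> y k = c * y_vec r I eta k"
    using scaled_y_vec_of_power_eq[of I y mu] pow unfolding I_def by auto
  have "w = c *s VT_mult l v (y_vec r I eta)"
    unfolding w scale_VT_mult by (rule VT_mult_cong) (rule y)
  then have "w \<in> proj_class (VT_mult l v (y_vec r I eta))"
    unfolding proj_class_def using \<open>c \<noteq> 0\<close> by blast
  moreover have "VT_mult l v (y_vec r I eta) \<in> candidate_eigvecs d l v r"
    unfolding candidate_eigvecs_eq using \<open>admissible d l I eta\<close> by blast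
  ultimately show ?thesis by blast
qed

end

theorem theorem2p3:
  fixes v :: "nat \<Rightarrow> real^'n" and lam :: "nat \<Rightarrow> real" and r :: "nat \<Rightarrow> complex"
    and d l :: nat
  assumes d: "d \<ge> 3"
    and l: "1 \<le> l" "l \<le> CARD('n)"
    and orth: "\<forall>i<l. \<forall>j<l. v i \<bullet> v j = (if i = j then 1 else 0)"
    and lam_nz: "\<forall>i<l. lam i \<noteq> 0"
    and roots: "\<forall>i<l. r i ^ (d - 2) = complex_of_real (lam i)"
  shows "(\<forall>w\<in>candidate_eigvecs d l v r.
            is_eigenvector d (\<lambda>xs. complex_of_real (odeco_tensor l lam v xs)) w)
       \<and> real (card (proj_class ` candidate_eigvecs d l v r))
            = ((real d - 1) ^ l - 1) / (real d - 2)
       \<and> (\<forall>w. is_eigenvector d (\<lambda>xs. complex_of_real (odeco_tensor l lam v xs)) w \<longrightarrow>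
            (\<exists>w0\<in>candidate_eigvecs d l v r. w \<in> proj_class w0)
            \<or> (w \<noteq> 0 \<and> in_nullspace_V l v w))
       \<and> (\<forall>w. w \<noteq> 0 \<and> in_nullspace_V l v w \<longrightarrow>
            is_eigenvector d (\<lambda>xs. complex_of_real (odeco_tensor l lam v xs)) w)"
proof -
  interpret odeco d l v lam r
    using d orth lam_nz roots by unfold_locales
  show ?thesis
    using candidate_is_eigenvector real_card_proj_class_candidates eigenvector_cases
      nullspace_is_eigenvector by blast
qed

end
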